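(* Let $G$ be a group with identity $e$, $A$ a finite set with $|A|\ge2$, $S\subseteq G$ finite with $e\in S$ and $|S|\ge2$. Suppose $(\mathcal P,f)$ generates a local map $\mu:A^S\to A$. If $e$ is not essential for $\mu$, then $|\mathcal P|=|A|^{|S|}-|A|^{|S|-1}$.
   Context: $A^S$ is the set of functions $S\to A$. For $s\in S$, $\mathrm{Res}_s(z)=z|_{S\setminus\{s\}}$. An element $s\in S$ is essential for $\mu$ if there exist $z,w\in A^S$ with $\mathrm{Res}_s(z)=\mathrm{Res}_s(w)$ but $\mu(z)\neq\mu(w)$. The pair $(\mathcal P,f)$ generates $\mu$ if $\mathcal P=\{z\in A^S:\mu(z)\neq z(e)\}$ and $f:\mathcal P\to A$ is the restriction of $\mu$ to $\mathcal P$. *)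

theory Defs
  imports "HOL-Algebra.Group" "HOL-Library.FuncSet"
begin

definition Res :: "'g set \<Rightarrow> 'g \<Rightarrow> ('g \<Rightarrow> 'a) \<Rightarrow> ('g \<Rightarrow> 'a)" where
  "Res S s z = restrict z (S - {s})"

definition essential :: "'g set \<Rightarrow> 'a set \<Rightarrow> (('g \<Rightarrow> 'a) \<Rightarrow> 'a) \<Rightarrow> 'g \<Rightarrow> bool" where
  "essential S A \<mu> s \<longleftrightarrow>
     (\<exists>z \<in> S \<rightarrow>\<^sub>E A. \<exists>w \<in> S \<rightarrow>\<^sub>E A. Res S s z = Res S s w \<and> \<mu> z \<noteq> \<mu> w)"

definition generates :: "'g set \<Rightarrow> 'a set \<Rightarrow> 'g \<Rightarrow> (('g \<Rightarrow> 'a) \<Rightarrow> 'a)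
    \<Rightarrow> ('g \<Rightarrow> 'a) set \<Rightarrow> (('g \<Rightarrow> 'a) \<Rightarrow> 'a) \<Rightarrow> bool" where
  "generates S A e \<mu> P f \<longleftrightarrow>
     P = {z \<in> S \<rightarrow>\<^sub>E A. \<mu> z \<noteq> z e} \<and> f = restrict \<mu> P"

end

theory Submission
  imports Defs
begin

(* If s is not essential, a configuration z with mu z = z s is determined by its restriction to
   S - {s}, and every restriction r arises this way: put at s the value mu takes on any extension
   of r.  So the configurations outside P correspond to A^(S - {s}), and P is their complement
   in A^S. *)

lemma PiE_eqI_Res:
  assumes "z \<in> S \<rightarrow>\<^sub>E A" "w \<in> S \<rightarrow>\<^sub>E A" "Res S s z = Res S s w" "z s = w s"
  shows "z = w"
proof
  fix x
  show "z x = w x"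
  proof (cases "x \<in> S - {s}")
    case True
    then show ?thesis using fun_cong[OF assms(3), of x] by (simp add: Res_def)
  next
    case outside: False
    show ?thesis
    proof (cases "x = s")
      case True
      with assms(4) show ?thesis by simp
    next
      case False
      with outside have "x \<notin> S" by simp
      with assms(1,2) show ?thesis by (metis PiE_arb)
    qed
  qed
qed

lemma fun_upd_in_PiE_Res:
  assumes "r \<in> (S - {s}) \<rightarrow>\<^sub>E A" "s \<in> S" "a \<in> A"
  shows "r(s := a) \<in> S \<rightarrow>\<^sub>E A"
  using assms by (auto simp: PiE_def extensional_def Pi_def)

lemma Res_fun_upd:
  assumes "r \<in> (S - {s}) \<rightarrow>\<^sub>E A"
  shows "Res S s (r(s := a)) = r"
proof
  fix x
  show "Res S s (r(s := a)) x = r x"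
    using assms by (cases "x \<in> S - {s}") (auto simp: Res_def dest: PiE_arb)
qed

lemma Res_in_PiE:
  assumes "z \<in> S \<rightarrow>\<^sub>E A"
  shows "Res S s z \<in> (S - {s}) \<rightarrow>\<^sub>E A"
  using assms unfolding Res_def restrict_PiE_iff by blast

lemma not_essentialD:
  assumes "\<not> essential S A \<mu> s" "z \<in> S \<rightarrow>\<^sub>E A" "w \<in> S \<rightarrow>\<^sub>E A" "Res S s z = Res S s w"
  shows "\<mu> z = \<mu> w"
  using assms unfolding essential_def by blast

lemma bij_betw_Res_not_essential:
  assumes "\<not> essential S A \<mu> s" "\<mu> \<in> (S \<rightarrow>\<^sub>E A) \<rightarrow> A" "s \<in> S" "A \<noteq> {}"
  shows "bij_betw (Res S s) {z \<in> S \<rightarrow>\<^sub>E A. \<mu> z = z s} ((S - {s}) \<rightarrow>\<^sub>E A)"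
proof (rule bij_betwI')
  fix z w
  assume z: "z \<in> {z \<in> S \<rightarrow>\<^sub>E A. \<mu> z = z s}" and w: "w \<in> {z \<in> S \<rightarrow>\<^sub>E A. \<mu> z = z s}"
  show "Res S s z = Res S s w \<longleftrightarrow> z = w"
  proof
    assume same_Res: "Res S s z = Res S s w"
    from z w have configs: "z \<in> S \<rightarrow>\<^sub>E A" "w \<in> S \<rightarrow>\<^sub>E A" by simp_all
    from z have "z s = \<mu> z" by simp
    also have "\<dots> = \<mu> w"
      using not_essentialD[OF assms(1) configs same_Res] .
    also from w have "\<dots> = w s" by simp
    finally show "z = w"
      using PiE_eqI_Res[OF configs same_Res] by simp
  qed simp
next
  fix z
  assume "z \<in> {z \<in> S \<rightarrow>\<^sub>E A. \<mu> z = z s}"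
  then show "Res S s z \<in> (S - {s}) \<rightarrow>\<^sub>E A"
    by (simp add: Res_in_PiE)
next
  fix r
  assume r: "r \<in> (S - {s}) \<rightarrow>\<^sub>E A"
  obtain a where a: "a \<in> A" using assms(4) by blast
  define v where "v = \<mu> (r(s := a))"
  have extension: "r(s := a) \<in> S \<rightarrow>\<^sub>E A"
    using fun_upd_in_PiE_Res[OF r assms(3) a] .
  have "v \<in> A"
    using assms(2) extension unfolding v_def by (rule funcset_mem)
  then have fixed: "r(s := v) \<in> S \<rightarrow>\<^sub>E A"
    by (rule fun_upd_in_PiE_Res[OF r assms(3)])
  have "\<mu> (r(s := v)) = \<mu> (r(s := a))"
    using not_essentialD[OF assms(1) fixed extension] by (simp add: Res_fun_upd[OF r])
  then have "\<mu> (r(s := v)) = v"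
    unfolding v_def .
  with fixed show "\<exists>z \<in> {z \<in> S \<rightarrow>\<^sub>E A. \<mu> z = z s}. r = Res S s z"
    by (intro bexI[where x = "r(s := v)"]) (simp_all add: Res_fun_upd[OF r])
qed

lemma card_generates_not_essential:
  assumes "generates S A s \<mu> P f" "\<not> essential S A \<mu> s" "\<mu> \<in> (S \<rightarrow>\<^sub>E A) \<rightarrow> A"
    and "finite S" "s \<in> S" "finite A" "A \<noteq> {}"
  shows "card P = card A ^ card S - card A ^ (card S - 1)"
proof -
  define Q where "Q = {z \<in> S \<rightarrow>\<^sub>E A. \<mu> z = z s}"
  have P: "P = (S \<rightarrow>\<^sub>E A) - Q"
    using assms(1) unfolding generates_def Q_def by auto
  have "card Q = card ((S - {s}) \<rightarrow>\<^sub>E A)"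
    unfolding Q_def by (rule bij_betw_same_card[OF bij_betw_Res_not_essential[OF assms(2,3,5,7)]])
  also have "\<dots> = card A ^ (card S - 1)"
    using assms(4,5) by (simp add: card_PiE)
  finally have "card Q = card A ^ (card S - 1)" .
  moreover have "finite (S \<rightarrow>\<^sub>E A)" "Q \<subseteq> S \<rightarrow>\<^sub>E A"
    using assms(4,6) by (auto simp: finite_PiE Q_def)
  ultimately show ?thesis
    unfolding P by (simp add: card_Diff_subset finite_subset card_PiE assms(4))
qed

theorem mainTheorem8:
  fixes G (structure)
    and A :: "'a set" and S :: "'g set"
    and \<mu> :: "('g \<Rightarrow> 'a) \<Rightarrow> 'a"
    and P :: "('g \<Rightarrow> 'a) set" and f :: "('g \<Rightarrow> 'a) \<Rightarrow> 'a"
  assumes "group G"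
    and "finite A" and "card A \<ge> 2"
    and "S \<subseteq> carrier G" and "finite S" and "\<one> \<in> S" and "card S \<ge> 2"
    and "\<mu> \<in> (S \<rightarrow>\<^sub>E A) \<rightarrow> A"
    and "generates S A \<one> \<mu> P f"
    and "\<not> essential S A \<mu> \<one>"
  shows "card P = card A ^ card S - card A ^ (card S - 1)"
proof -
  have "A \<noteq> {}" using assms(3) by auto
  then show ?thesis
    using card_generates_not_essential[OF assms(9,10,8,5,6,2)] by blast
qed

end
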